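(* Let $n\geqslant 2$ and let $F:(\mathbb{C}^N,0)\to M_{2,n}$ be a holomorphic map germ such that $X=F^{-1}(M^2_{2,n})\subset\mathbb{C}^N$ is an essentially isolated determinantal singularity (EIDS). Then the singular set $\Sigma X=F^{-1}(M^1_{2,n})=F^{-1}(0)$ of $X$ is an isolated complete intersection singularity (ICIS) in $\mathbb{C}^N$.
   Context: $M_{m,n}$ is the space of complex $m\times n$ matrices and $M^t_{m,n}=\{A:\operatorname{rank}A<t\}$; it has codimension $(m-t+1)(n-t+1)$ and a Whitney stratification by $M^i_{m,n}\setminus M^{i-1}_{m,n}$. $X=F^{-1}(M^t_{m,n})$ is determinantal of type $(m,n,t)$ if $\operatorname{codim}X=(m-t+1)(n-t+1)$. A point $x\in X$ is essentially nonsingular if $F$ is transversal at $x$ to the stratum $M^i_{m,n}\setminus M^{i-1}_{m,n}$ with $i=\operatorname{rank}F(x)+1$; $X$ is an EIDS if every point of $X$ in a punctured neighbourhood of $0$ is essentially nonsingular. *)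

theory Defs
  imports "HOL-Analysis.Analysis"
begin

definition holo_on :: "(complex^'N) set \<Rightarrow> (complex^'N \<Rightarrow> complex) \<Rightarrow> bool" where
  "holo_on U f \<longleftrightarrow> (\<forall>x\<in>U. \<exists>L. (f has_derivative L) (at x) \<and> (\<forall>c v. L (c *s v) = c * L v))"

definition holo_mat_on :: "(complex^'N) set \<Rightarrow> (complex^'N \<Rightarrow> complex^'n^'m) \<Rightarrow> bool" where
  "holo_mat_on U F \<longleftrightarrow> (\<forall>i j. holo_on U (\<lambda>x. F x $ i $ j))"

definition submersive_at :: "nat \<Rightarrow> (nat \<Rightarrow> complex^'N \<Rightarrow> complex) \<Rightarrow> complex^'N \<Rightarrow> bool" where
  "submersive_at k g x \<longleftrightarrow> (\<exists>D. (\<forall>i<k. (g i has_derivative D i) (at x)) \<and>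
      (\<forall>w::nat \<Rightarrow> complex. \<exists>v. \<forall>i<k. D i v = w i))"

text \<open>z is a regular point of A of complex dimension d: near z, A is a complex submanifold of
  dimension d, i.e. the zero set of a holomorphic submersion to C^(N-d).\<close>
definition regular_pt :: "(complex^'N) set \<Rightarrow> complex^'N \<Rightarrow> nat \<Rightarrow> bool" where
  "regular_pt A z d \<longleftrightarrow> z \<in> A \<and> d \<le> CARD('N) \<and>
     (\<exists>U \<phi>. open U \<and> z \<in> U \<and> (\<forall>i<CARD('N) - d. holo_on U (\<phi> i)) \<and>
        A \<inter> U = {w\<in>U. \<forall>i<CARD('N) - d. \<phi> i w = 0} \<and>
        (\<forall>w\<in>A \<inter> U. submersive_at (CARD('N) - d) \<phi> w))"

text \<open>Dimension of the germ of A at 0 (Chirka): lim sup of the dimensions at regular points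
  tending to 0.\<close>
definition germ_dim :: "(complex^'N) set \<Rightarrow> nat" where
  "germ_dim A = (LEAST m. \<exists>\<epsilon>>0. \<forall>z\<in>A \<inter> ball 0 \<epsilon>. \<forall>d. regular_pt A z d \<longrightarrow> d \<le> m)"

definition germ_codim :: "(complex^'N) set \<Rightarrow> nat" where
  "germ_codim A = CARD('N) - germ_dim A"

definition det_var :: "nat \<Rightarrow> (complex^'n^'m) set" where
  "det_var t = {A. rank A < t}"

text \<open>Tangent vectors to a set S at A: velocities at 0 of curves in S through A.
  For a submanifold (such as a rank stratum) this is its tangent space.\<close>
definition tangent_vecs :: "('a::real_normed_vector) set \<Rightarrow> 'a \<Rightarrow> 'a set" where
  "tangent_vecs S A = {v. \<exists>\<gamma>. \<gamma> 0 = A \<and> (\<forall>t. \<gamma> t \<in> S) \<and> (\<gamma> has_vector_derivative v) (at 0)}"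

definition transversal_at ::
  "(complex^'N \<Rightarrow> complex^'n^'m) \<Rightarrow> complex^'N \<Rightarrow> (complex^'n^'m) set \<Rightarrow> bool" where
  "transversal_at F x S \<longleftrightarrow>
     (\<exists>L. (F has_derivative L) (at x) \<and> {L u + v | u v. v \<in> tangent_vecs S (F x)} = UNIV)"

definition ess_nonsingular :: "(complex^'N \<Rightarrow> complex^'n^'m) \<Rightarrow> complex^'N \<Rightarrow> bool" where
  "ess_nonsingular F x \<longleftrightarrow>
     (let i = rank (F x) + 1 in transversal_at F x (det_var i - det_var (i - 1)))"

definition is_EIDS :: "(complex^'N) set \<Rightarrow> (complex^'N \<Rightarrow> complex^'n^'m) \<Rightarrow> nat \<Rightarrow> bool" where
  "is_EIDS U F t \<longleftrightarrow>
     (let X = {x\<in>U. F x \<in> det_var t} in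
       germ_codim X = (CARD('m) - t + 1) * (CARD('n) - t + 1) \<and>
       (\<exists>\<epsilon>>0. \<forall>x\<in>X \<inter> ball 0 \<epsilon> - {0}. ess_nonsingular F x))"

definition is_ICIS :: "(complex^'N) set \<Rightarrow> bool" where
  "is_ICIS V \<longleftrightarrow> (\<exists>k g \<epsilon>. \<epsilon> > 0 \<and> (\<forall>i<k. holo_on (ball 0 \<epsilon>) (g i) \<and> g i 0 = 0) \<and>
      V \<inter> ball 0 \<epsilon> = {x\<in>ball 0 \<epsilon>. \<forall>i<k. g i x = 0} \<and>
      germ_codim V = k \<and>
      (\<forall>x\<in>V \<inter> ball 0 \<epsilon> - {0}. submersive_at k g x))"

end

(*
  Since rank F(x) < 1 exactly when F(x) = 0, the singular set is the zero set V of F. At a point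
  x of V other than the origin, F(x) = 0 lies in the stratum of rank-0 matrices, which is the
  single point 0 and has trivial tangent space; so transversality says that dF(x) is onto, i.e.
  the entries of F form a holomorphic submersion along V - {0}. Thus V is cut out by these
  equations and is a manifold of the expected codimension off the origin, unless 0 is isolated in
  V, when the coordinate functions cut it out instead.

  The germ dimension is well defined because the dimension of a submanifold at a point is unique:
  if the zero set of k' submersive equations lay inside that of k > k' such equations, some
  differential of the second family would be nonzero on the kernel of the first, and Sussmann's
  open mapping theorem would produce a common zero of the first family at which the second does
  not vanish.
*)

theory Submission
  imports Defs
begin

section \<open>Families of real-linear complex functionals\<close>

lemma functionals_onto_right_inverse:
  fixes A :: "nat \<Rightarrow> 'a::real_vector \<Rightarrow> complex"
  assumes lin: "\<And>i. i < k \<Longrightarrow> linear (A i)" and onto: "\<forall>w. \<exists>v. \<forall>i<k. A i v = w i"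
  obtains p q where
    "\<And>w i. i < k \<Longrightarrow> A i (\<Sum>j<k. Re (w j) *\<^sub>R p j + Im (w j) *\<^sub>R q j) = w i"
proof -
  have "\<forall>j. \<exists>v. \<forall>i<k. A i v = (if i = j then c else 0)" for c
  proof
    fix j
    show "\<exists>v. \<forall>i<k. A i v = (if i = j then c else 0)"
      using spec[OF onto, of "\<lambda>i. if i = j then c else 0"] by simp
  qed
  from choice[OF this[of 1]] choice[OF this[of \<i>]] obtain p q
    where p: "\<And>j i. i < k \<Longrightarrow> A i (p j) = (if i = j then 1 else 0)"
      and q: "\<And>j i. i < k \<Longrightarrow> A i (q j) = (if i = j then \<i> else 0)"
    by blast
  have "A i (\<Sum>j<k. Re (w j) *\<^sub>R p j + Im (w j) *\<^sub>R q j) = w i" if "i < k" for w i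
  proof -
    have "A i (\<Sum>j<k. Re (w j) *\<^sub>R p j + Im (w j) *\<^sub>R q j)
        = (\<Sum>j<k. Re (w j) *\<^sub>R A i (p j) + Im (w j) *\<^sub>R A i (q j))"
      using lin[OF that] by (simp add: linear_sum linear_add linear_scale)
    also have "\<dots> = (\<Sum>j<k. if j = i then Re (w j) *\<^sub>R 1 + Im (w j) *\<^sub>R \<i> else 0)"
      using p q that by (intro sum.cong) auto
    also have "\<dots> = Re (w i) *\<^sub>R 1 + Im (w i) *\<^sub>R \<i>"
      using that by simp
    also have "\<dots> = w i" by (simp add: complex_eq_iff)
    finally show ?thesis .
  qed
  then show thesis by (rule that)
qed

lemma dim_kernel_complex_functional:
  fixes f :: "'a::euclidean_space \<Rightarrow> complex"
  assumes f: "linear f" and S: "subspace S"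
    and a: "a \<in> S" "f a = 1" and b: "b \<in> S" "f b = \<i>"
  shows "dim {v\<in>S. f v = 0} + 2 \<le> dim S"
proof -
  define K where "K = {v\<in>S. f v = 0}"
  have K: "subspace K"
    unfolding K_def using S f by (auto simp: subspace_def linear_add linear_scale linear_0)
  have f_comb: "f (\<alpha> *\<^sub>R a + \<beta> *\<^sub>R b) = Complex \<alpha> \<beta>" for \<alpha> \<beta>
    using f a b by (simp add: linear_add linear_scale complex_eq_iff)
  have span_ab: "x \<in> span {a, b} \<longleftrightarrow> (\<exists>\<alpha> \<beta>. x = \<alpha> *\<^sub>R a + \<beta> *\<^sub>R b)" for x
    by (auto simp: span_insert span_singleton algebra_simps)
  have "a \<noteq> b" using a b by auto
  have "independent {a, b}"
  proof -
    have "b \<noteq> 0" using b f by (auto simp: linear_0)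
    moreover have "a \<notin> span {b}"
      using f a b by (auto simp: span_singleton linear_scale complex_eq_iff)
    ultimately show ?thesis using \<open>a \<noteq> b\<close> by (simp add: independent_insert)
  qed
  then have dim_ab: "dim (span {a, b}) = 2"
    using \<open>a \<noteq> b\<close> by (simp add: dim_eq_card_independent)
  have "K \<inter> span {a, b} \<subseteq> {0}"
  proof
    fix x assume x: "x \<in> K \<inter> span {a, b}"
    then obtain \<alpha> \<beta> where x_eq: "x = \<alpha> *\<^sub>R a + \<beta> *\<^sub>R b" using span_ab by blast
    with x have "Complex \<alpha> \<beta> = 0" using f_comb by (simp add: K_def)
    then show "x \<in> {0}" using x_eq by (simp add: complex_eq_iff)
  qed
  then have "K \<inter> span {a, b} = {0}" using subspace_0[OF K] span_zero by blast
  moreover have "span {a, b} \<subseteq> S" using S a b by (simp add: span_minimal)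
  then have "dim {x + y |x y. x \<in> K \<and> y \<in> span {a, b}} \<le> dim S"
    using S by (intro dim_subset) (auto simp: K_def intro: subspace_add)
  ultimately show ?thesis
    using dim_sums_Int[OF K subspace_span[of "{a, b}"]] dim_ab unfolding K_def by simp
qed

lemma functionals_onto_dim_ge:
  fixes B :: "nat \<Rightarrow> 'a::euclidean_space \<Rightarrow> complex"
  assumes lin: "\<And>i. i < k \<Longrightarrow> linear (B i)"
    and "subspace S" and "\<forall>w. \<exists>v\<in>S. \<forall>i<k. B i v = w i"
  shows "2 * k \<le> dim S"
  using assms
proof (induction k arbitrary: S)
  case 0
  then show ?case by simp
next
  case (Suc k)
  define K where "K = {v\<in>S. B k v = 0}"
  have "subspace K"
    unfolding K_def using Suc.prems(1)[of k] \<open>subspace S\<close>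
    by (auto simp: subspace_def linear_add linear_scale linear_0)
  moreover have "\<forall>w. \<exists>v\<in>K. \<forall>i<k. B i v = w i"
  proof
    fix w :: "nat \<Rightarrow> complex"
    obtain v where "v \<in> S" "\<forall>i<Suc k. B i v = (w(k := 0)) i" using Suc.prems(3) by blast
    then show "\<exists>v\<in>K. \<forall>i<k. B i v = w i" unfolding K_def by (intro bexI[of _ v]) auto
  qed
  ultimately have "2 * k \<le> dim K" using Suc.prems(1) by (intro Suc.IH) auto
  moreover obtain a where "a \<in> S" "B k a = 1" using Suc.prems(3)[rule_format, of "\<lambda>_. 1"] by auto
  moreover obtain b where "b \<in> S" "B k b = \<i>" using Suc.prems(3)[rule_format, of "\<lambda>_. \<i>"] by auto
  ultimately show ?case
    using dim_kernel_complex_functional[of "B k" S a b] Suc.prems(1,2) unfolding K_def by simp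
qed

lemma functionals_onto_count_le_if_kernel_subset:
  fixes A B :: "nat \<Rightarrow> 'a::euclidean_space \<Rightarrow> complex"
  assumes linA: "\<And>i. i < k' \<Longrightarrow> linear (A i)" and linB: "\<And>i. i < k \<Longrightarrow> linear (B i)"
    and ontoA: "\<forall>w. \<exists>v. \<forall>i<k'. A i v = w i"
    and ontoB: "\<forall>w. \<exists>v. \<forall>i<k. B i v = w i"
    and kernel: "\<And>v. \<forall>i<k'. A i v = 0 \<Longrightarrow> \<forall>i<k. B i v = 0"
  shows "k \<le> k'"
proof -
  obtain p q where pq:
    "\<And>w i. i < k' \<Longrightarrow> A i (\<Sum>j<k'. Re (w j) *\<^sub>R p j + Im (w j) *\<^sub>R q j) = w i"
    using functionals_onto_right_inverse[OF linA ontoA] by blast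
  define P where "P = p ` {..<k'} \<union> q ` {..<k'}"
  have "card P \<le> card (p ` {..<k'}) + card (q ` {..<k'})"
    unfolding P_def by (rule card_Un_le)
  also have "\<dots> \<le> 2 * k'"
    using card_image_le[of "{..<k'}" p] card_image_le[of "{..<k'}" q] by simp
  finally have "card P \<le> 2 * k'" .
  text \<open>B is onto already on span P: correct any preimage by its A-image lifted to span P.\<close>
  have "\<forall>w. \<exists>y\<in>span P. \<forall>i<k. B i y = w i"
  proof
    fix w :: "nat \<Rightarrow> complex"
    obtain v where v: "\<forall>i<k. B i v = w i" using ontoB by blast
    define y where "y = (\<Sum>j<k'. Re (A j v) *\<^sub>R p j + Im (A j v) *\<^sub>R q j)"
    have "\<forall>i<k'. A i (v - y) = 0"
      using pq linA by (simp add: y_def linear_diff)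
    then have "\<forall>i<k. B i (v - y) = 0" by (rule kernel)
    then have "\<forall>i<k. B i y = w i"
      using v linB by (simp add: linear_diff)
    moreover have "y \<in> span P"
      unfolding y_def P_def by (intro span_sum span_add span_scale) (auto intro: span_base)
    ultimately show "\<exists>y\<in>span P. \<forall>i<k. B i y = w i" by blast
  qed
  then have "2 * k \<le> dim (span P)"
    using linB by (intro functionals_onto_dim_ge) simp_all
  also have "\<dots> \<le> card P"
    unfolding P_def by (simp add: dim_span dim_le_card')
  also have "\<dots> \<le> 2 * k'" by fact
  finally show ?thesis by simp
qed

section \<open>Zero sets of submersions\<close>

lemma has_derivative_vec_lambda:
  fixes f :: "'a::euclidean_space \<Rightarrow> 'b::real_normed_vector^'n"
  assumes "\<And>j. ((\<lambda>x. f x $ j) has_derivative (\<lambda>h. f' h $ j)) (at a within S)"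
  shows "(f has_derivative f') (at a within S)"
proof -
  have lin: "linear (\<lambda>h. f' h $ j)" for j
    using assms has_derivative_linear by blast
  have "linear f'"
    by (rule linearI) (simp_all add: vec_eq_iff linear_add[OF lin] linear_scale[OF lin])
  then have "bounded_linear f'"
    by (simp add: linear_conv_bounded_linear)
  moreover have "((\<lambda>y. ((f y - f a) - f' (y - a)) /\<^sub>R norm (y - a)) \<longlongrightarrow> 0) (at a within S)"
  proof (rule vec_tendstoI)
    fix j
    show "((\<lambda>y. (((f y - f a) - f' (y - a)) /\<^sub>R norm (y - a)) $ j) \<longlongrightarrow> 0 $ j) (at a within S)"
      using assms[of j] by (simp add: has_derivative_at_within)
  qed
  ultimately show ?thesis by (simp add: has_derivative_at_within)
qed

lemma continuous_on_compose_fst: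
  "continuous_on S f \<Longrightarrow> continuous_on (S \<times> T) (\<lambda>x. f (fst x))"
  by (rule continuous_on_compose2[OF _ continuous_on_fst[OF continuous_on_id]]) auto

lemma has_derivative_compose_fst:
  "(f has_derivative f') (at z) \<Longrightarrow> ((\<lambda>x. f (fst x)) has_derivative (\<lambda>x. f' (fst x))) (at (z, w))"
  using has_derivative_compose[OF bounded_linear_imp_has_derivative[OF bounded_linear_fst]]
  by fastforce

text \<open>Coordinate j carries \<psi> (idx j) if idx j < k and the auxiliary variable y $ j otherwise.
  This turns k equations into a map between spaces of finite type, to which the open mapping
  theorem applies.\<close>
definition padded :: "nat \<Rightarrow> ('N::finite \<Rightarrow> nat) \<Rightarrow> (nat \<Rightarrow> 'a \<Rightarrow> complex) \<Rightarrow> 'a \<times> (complex^'N) \<Rightarrow> complex^'N"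
  where "padded k idx \<psi> x = (\<chi> j. if idx j < k then \<psi> (idx j) (fst x) else snd x $ j)"

lemma continuous_on_padded:
  assumes "\<And>i. i < k \<Longrightarrow> continuous_on S (\<psi> i)"
  shows "continuous_on (S \<times> UNIV) (padded k idx \<psi>)"
  unfolding padded_def
proof (intro continuous_intros)
  show "continuous_on (S \<times> UNIV) (\<lambda>x. if idx j < k then \<psi> (idx j) (fst x) else snd x $ j)" for j
    by (cases "idx j < k") (simp_all add: continuous_on_compose_fst assms continuous_intros)
qed

lemma has_derivative_padded:
  fixes \<psi> :: "nat \<Rightarrow> 'a::euclidean_space \<Rightarrow> complex"
  assumes "\<And>i. i < k \<Longrightarrow> (\<psi> i has_derivative A i) (at z)"
  shows "(padded k idx \<psi> has_derivative padded k idx A) (at (z, w))"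
  unfolding padded_def
proof (intro has_derivative_vec_lambda)
  show "((\<lambda>x. (\<chi> j. if idx j < k then \<psi> (idx j) (fst x) else snd x $ j) $ j) has_derivative
      (\<lambda>x. (\<chi> j. if idx j < k then A (idx j) (fst x) else snd x $ j) $ j)) (at (z, w))" for j
    using has_derivative_compose_fst[OF assms]
      bounded_linear_imp_has_derivative[OF bounded_linear_compose[OF bounded_linear_vec_nth bounded_linear_snd]]
    by (cases "idx j < k") auto
qed

lemma padded_derivative_has_right_inverse:
  fixes A :: "nat \<Rightarrow> 'a::real_normed_vector \<Rightarrow> complex" and C :: "'a \<Rightarrow> real"
    and idx :: "'N::finite \<Rightarrow> nat" and e :: "nat \<Rightarrow> 'N"
  assumes linA: "\<And>i. i < k \<Longrightarrow> linear (A i)" and onto: "\<forall>w. \<exists>v. \<forall>i<k. A i v = w i"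
    and linC: "linear C" and v0: "\<And>i. i < k \<Longrightarrow> A i v0 = 0" "C v0 \<noteq> 0"
    and e: "\<And>j. idx j < k \<Longrightarrow> e (idx j) = j"
  obtains g' :: "(complex^'N) \<times> real \<Rightarrow> 'a \<times> (complex^'N)"
  where "linear g'"
    and "(\<lambda>x. (padded k idx A x, C (fst x))) \<circ> g' = id"
proof -
  obtain p q where pq:
    "\<And>w i. i < k \<Longrightarrow> A i (\<Sum>j<k. Re (w j) *\<^sub>R p j + Im (w j) *\<^sub>R q j) = w i"
    using functionals_onto_right_inverse[OF linA onto] by blast
  define R where "R y = (\<Sum>m<k. Re (y $ e m) *\<^sub>R p m + Im (y $ e m) *\<^sub>R q m)" for y :: "complex^'N"
  have AR: "A (idx j) (R y) = y $ j" if "idx j < k" for y j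
    using pq[OF that, of "\<lambda>m. y $ e m"] e[OF that] by (simp add: R_def)
  have linR: "linear R"
    unfolding R_def
    by (intro bounded_linear.linear bounded_linear_sum bounded_linear_add bounded_linear_scaleR_const
        bounded_linear_compose[OF bounded_linear_Re] bounded_linear_compose[OF bounded_linear_Im]
        bounded_linear_vec_nth)
  define u0 where "u0 = v0 /\<^sub>R C v0"
  have C_u0: "C u0 = 1"
    using v0(2) by (simp add: u0_def linear_scale[OF linC])
  have A_u0: "A i u0 = 0" if "i < k" for i
    using v0(1)[OF that] by (simp add: u0_def linear_scale[OF linA[OF that]])
  define g' where "g' x = (R (fst x) + (snd x - C (R (fst x))) *\<^sub>R u0,
      \<chi> j. if idx j < k then 0 else fst x $ j)" for x :: "(complex^'N) \<times> real"
  have "linear g'"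
    by (rule linearI) (simp_all add: g'_def linear_add[OF linR] linear_add[OF linC]
        linear_scale[OF linR] linear_scale[OF linC] vec_eq_iff scaleR_add_left scaleR_diff_left
        scaleR_add_right scaleR_diff_right)
  moreover have "(\<lambda>x. (padded k idx A x, C (fst x))) \<circ> g' = id"
  proof
    fix x :: "(complex^'N) \<times> real"
    have "A (idx j) (fst (g' x)) = fst x $ j" if "idx j < k" for j
      using AR[OF that] A_u0[OF that]
      by (simp add: g'_def linear_add[OF linA[OF that]] linear_scale[OF linA[OF that]])
    moreover have "snd (g' x) $ j = fst x $ j" if "\<not> idx j < k" for j
      using that by (simp add: g'_def)
    moreover have "C (fst (g' x)) = snd x"
      using C_u0 by (simp add: g'_def linear_add[OF linC] linear_scale[OF linC])
    ultimately show "((\<lambda>x. (padded k idx A x, C (fst x))) \<circ> g') x = id x"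
      by (simp add: padded_def vec_eq_iff prod_eq_iff)
  qed
  ultimately show thesis by (rule that)
qed

lemma finite_type_enumeration:
  obtains e :: "nat \<Rightarrow> 'a::finite" and idx
  where "\<And>P. (\<forall>i<CARD('a). P (e i)) \<longleftrightarrow> (\<forall>j. P j)"
    and "\<And>j. e (idx j) = j" and "\<And>i. i < CARD('a) \<Longrightarrow> idx (e i) = i"
proof -
  obtain e where e: "bij_betw e {0..<CARD('a)} (UNIV::'a set)"
    using ex_bij_betw_nat_finite[of "UNIV::'a set"] by auto
  define idx where "idx = inv_into {0..<CARD('a)} e"
  have "idx j < CARD('a)" "e (idx j) = j" for j
    using e inv_into_into[of j e "{0..<CARD('a)}"] unfolding idx_def bij_betw_def
    by (auto simp: f_inv_into_f)
  moreover have "idx (e i) = i" if "i < CARD('a)" for i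
    using e that unfolding idx_def bij_betw_def by (simp add: inv_into_f_f)
  ultimately show thesis by (metis that)
qed

lemma functionals_onto_le_card:
  fixes A :: "nat \<Rightarrow> complex^'N \<Rightarrow> complex"
  assumes "\<And>i. i < k \<Longrightarrow> linear (A i)" and "\<forall>w. \<exists>v. \<forall>i<k. A i v = w i"
  shows "k \<le> CARD('N)"
proof -
  have "2 * k \<le> dim (UNIV :: (complex^'N) set)"
    using assms by (intro functionals_onto_dim_ge) auto
  then show ?thesis by simp
qed

lemma open_mapping_hits_nonzero_level:
  fixes G :: "'a::real_normed_vector \<Rightarrow> 'b::euclidean_space \<times> real"
  assumes "open S" "x \<in> S" "continuous_on S G" "(G has_derivative G') (at x)"
    and "bounded_linear g'" "G' \<circ> g' = id" "G x = (0, 0)"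
  obtains y where "y \<in> S" "fst (G y) = 0" "snd (G y) \<noteq> 0"
proof -
  have "G x \<in> interior (G ` S)"
    using assms by (intro sussmann_open_mapping[of S G x G' g' S]) (auto simp: interior_open)
  then obtain \<epsilon> where "\<epsilon> > 0" "ball (0, 0) \<epsilon> \<subseteq> G ` S"
    using \<open>G x = (0, 0)\<close> by (metis mem_interior)
  moreover have "(0, \<epsilon>/2) \<in> ball (0, 0) \<epsilon>" using \<open>\<epsilon> > 0\<close> by (simp add: dist_Pair_Pair)
  ultimately obtain y where "y \<in> S" "G y = (0, \<epsilon>/2)" by (metis imageE subsetD)
  with \<open>\<epsilon> > 0\<close> show thesis using that by simp
qed

lemma zero_set_of_submersion_escapes:
  fixes \<psi> :: "nat \<Rightarrow> complex^'N \<Rightarrow> complex" and \<eta> :: "complex^'N \<Rightarrow> real"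
  assumes S: "open S" "z \<in> S"
    and cont: "\<And>i. i < k \<Longrightarrow> continuous_on S (\<psi> i)" "continuous_on S \<eta>"
    and der: "\<And>i. i < k \<Longrightarrow> (\<psi> i has_derivative A i) (at z)" "(\<eta> has_derivative C) (at z)"
    and zero: "\<And>i. i < k \<Longrightarrow> \<psi> i z = 0" "\<eta> z = 0"
    and onto: "\<forall>w. \<exists>v. \<forall>i<k. A i v = w i"
    and v0: "\<And>i. i < k \<Longrightarrow> A i v0 = 0" "C v0 \<noteq> 0"
  obtains w where "w \<in> S" "\<And>i. i < k \<Longrightarrow> \<psi> i w = 0" "\<eta> w \<noteq> 0"
proof -
  have linA: "\<And>i. i < k \<Longrightarrow> linear (A i)" using der(1) has_derivative_linear by blast
  have linC: "linear C" using der(2) has_derivative_linear by blast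
  obtain e :: "nat \<Rightarrow> 'N" and idx where e_idx: "\<And>j. e (idx j) = j"
    and idx_e: "\<And>i. i < CARD('N) \<Longrightarrow> idx (e i) = i"
    using finite_type_enumeration[where 'a='N] by metis
  define G where "G x = (padded k idx \<psi> x, \<eta> (fst x))" for x :: "(complex^'N) \<times> (complex^'N)"
  obtain g' where "linear g'" and inv: "(\<lambda>x. (padded k idx A x, C (fst x))) \<circ> g' = id"
    using padded_derivative_has_right_inverse[of k A C v0 idx e] linA onto linC v0 e_idx by blast
  have contG: "continuous_on (S \<times> UNIV) G"
    unfolding G_def by (intro continuous_on_Pair continuous_on_padded continuous_on_compose_fst cont)
  have derG: "(G has_derivative (\<lambda>x. (padded k idx A x, C (fst x)))) (at (z, 0))"
    unfolding G_def by (intro has_derivative_Pair has_derivative_padded has_derivative_compose_fst der)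
  have "G (z, 0) = (0, 0)" unfolding G_def padded_def using zero by (simp add: vec_eq_iff)
  moreover have "bounded_linear g'" using \<open>linear g'\<close> by (simp add: linear_conv_bounded_linear)
  ultimately obtain y where y: "y \<in> S \<times> UNIV" "fst (G y) = 0" "snd (G y) \<noteq> 0"
    using open_mapping_hits_nonzero_level[OF _ _ contG derG _ inv] S
    by (auto simp: open_Times)
  have "k \<le> CARD('N)" using linA onto by (rule functionals_onto_le_card)
  then have "\<psi> i (fst y) = 0" if "i < k" for i
    using arg_cong[OF y(2), of "\<lambda>v. v $ e i"] idx_e[of i] that by (simp add: G_def padded_def)
  moreover have "\<eta> (fst y) \<noteq> 0" using y(3) by (simp add: G_def)
  ultimately show thesis using y(1) that by (simp add: mem_Times_iff)
qed

lemma holo_on_imp_continuous_on: "holo_on U f \<Longrightarrow> continuous_on U f"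
  unfolding holo_on_def by (meson continuous_at_imp_continuous_on has_derivative_continuous)

lemma holo_on_subset: "holo_on U f \<Longrightarrow> S \<subseteq> U \<Longrightarrow> holo_on S f"
  unfolding holo_on_def by blast

lemma holo_on_vec_nth: "holo_on S (\<lambda>x. x $ j)"
  unfolding holo_on_def
  by (intro ballI exI[of _ "\<lambda>h. h $ j"] conjI bounded_linear_imp_has_derivative bounded_linear_vec_nth)
    simp

lemma submersive_at_le_card: "submersive_at k g x \<Longrightarrow> k \<le> CARD('N)"
  for g :: "nat \<Rightarrow> complex^'N \<Rightarrow> complex"
  unfolding submersive_at_def by (metis functionals_onto_le_card has_derivative_linear)

lemma submersive_at_compose_surj:
  assumes "(F has_derivative L) (at x)" "surj L"
    and "\<And>i. i < k \<Longrightarrow> bounded_linear (c i)" and "\<forall>w. \<exists>M. \<forall>i<k. c i M = w i"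
  shows "submersive_at k (\<lambda>i y. c i (F y)) x"
  unfolding submersive_at_def
proof (intro exI[of _ "\<lambda>i v. c i (L v)"] conjI allI impI)
  show "((\<lambda>y. c i (F y)) has_derivative (\<lambda>v. c i (L v))) (at x)" if "i < k" for i
    using bounded_linear.has_derivative[OF assms(3)[OF that] assms(1)] .
  fix w :: "nat \<Rightarrow> complex"
  obtain M where "\<forall>i<k. c i M = w i" using assms(4) by blast
  moreover obtain v where "L v = M" using \<open>surj L\<close> by (metis surjD)
  ultimately show "\<exists>v. \<forall>i<k. c i (L v) = w i" by blast
qed

lemma derivative_vanishes_on_kernel_of_submersion:
  fixes \<psi> :: "nat \<Rightarrow> complex^'N \<Rightarrow> complex" and f :: "complex^'N \<Rightarrow> complex"
  assumes S: "open S" "z \<in> S"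
    and cont: "\<And>i. i < k \<Longrightarrow> continuous_on S (\<psi> i)" "continuous_on S f"
    and der: "\<And>i. i < k \<Longrightarrow> (\<psi> i has_derivative A i) (at z)" "(f has_derivative D) (at z)"
    and onto: "\<forall>w. \<exists>v. \<forall>i<k. A i v = w i"
    and vanish: "\<And>w. w \<in> S \<Longrightarrow> \<forall>i<k. \<psi> i w = 0 \<Longrightarrow> f w = 0"
    and "\<forall>i<k. \<psi> i z = 0" and v: "\<forall>i<k. A i v = 0"
  shows "D v = 0"
proof (rule ccontr)
  assume "D v \<noteq> 0"
  text \<open>Reduce to a real-valued function whose differential does not vanish at v.\<close>
  define c where "c = cnj (D v)"
  have "((\<lambda>w. Re (c * f w)) has_derivative (\<lambda>u. Re (c * D u))) (at z)"
    using bounded_linear.has_derivative[OF bounded_linear_Re has_derivative_mult_right[OF der(2)]] .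
  moreover have "Re (c * D v) \<noteq> 0"
    using \<open>D v \<noteq> 0\<close> by (simp add: c_def complex_eq_iff power2_eq_square[symmetric] sum_power2_eq_zero_iff)
  moreover have "continuous_on S (\<lambda>w. Re (c * f w))" using cont(2) by (intro continuous_intros)
  moreover have "Re (c * f z) = 0" using vanish S(2) \<open>\<forall>i<k. \<psi> i z = 0\<close> by simp
  ultimately obtain w where "w \<in> S" "\<forall>i<k. \<psi> i w = 0" "Re (c * f w) \<noteq> 0"
    using zero_set_of_submersion_escapes[OF S cont(1) _ der(1) _ _ _ onto] v \<open>\<forall>i<k. \<psi> i z = 0\<close>
    by metis
  then show False using vanish by simp
qed

section \<open>Regular points and the dimension of a germ\<close>

lemma regular_pt_codim_le:
  fixes A :: "(complex^'N) set"
  assumes "regular_pt A z d" and "regular_pt A z d'"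
  shows "CARD('N) - d \<le> CARD('N) - d'"
proof -
  define k k' where "k = CARD('N) - d" and "k' = CARD('N) - d'"
  obtain U \<phi> where U: "open U" "z \<in> U" "\<forall>i<k. holo_on U (\<phi> i)"
      "A \<inter> U = {w\<in>U. \<forall>i<k. \<phi> i w = 0}" "\<forall>w\<in>A \<inter> U. submersive_at k \<phi> w" and "z \<in> A"
    using assms(1) unfolding regular_pt_def k_def by blast
  obtain U' \<psi> where U': "open U'" "z \<in> U'" "\<forall>i<k'. holo_on U' (\<psi> i)"
      "A \<inter> U' = {w\<in>U'. \<forall>i<k'. \<psi> i w = 0}" "\<forall>w\<in>A \<inter> U'. submersive_at k' \<psi> w"
    using assms(2) unfolding regular_pt_def k'_def by blast
  obtain B where B: "\<forall>i<k. (\<phi> i has_derivative B i) (at z)" "\<forall>w. \<exists>v. \<forall>i<k. B i v = w i"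
    using U(5) \<open>z \<in> A\<close> U(2) unfolding submersive_at_def by blast
  obtain B' where B': "\<forall>i<k'. (\<psi> i has_derivative B' i) (at z)" "\<forall>w. \<exists>v. \<forall>i<k'. B' i v = w i"
    using U'(5) \<open>z \<in> A\<close> U'(2) unfolding submersive_at_def by blast
  have "\<forall>i<k. B i v = 0" if "\<forall>i<k'. B' i v = 0" for v
  proof (intro allI impI)
    fix i assume "i < k"
    show "B i v = 0"
    proof (rule derivative_vanishes_on_kernel_of_submersion[of "U \<inter> U'" z k' \<psi> "\<phi> i"])
      show "continuous_on (U \<inter> U') (\<psi> j)" if "j < k'" for j
        using U'(3) that holo_on_imp_continuous_on continuous_on_subset by blast
      show "continuous_on (U \<inter> U') (\<phi> i)"
        using U(3) \<open>i < k\<close> holo_on_imp_continuous_on continuous_on_subset by blast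
      show "\<phi> i w = 0" if "w \<in> U \<inter> U'" "\<forall>j<k'. \<psi> j w = 0" for w
        using that U(4) U'(4) \<open>i < k\<close> by blast
      show "\<forall>j<k'. \<psi> j z = 0" using U'(4) \<open>z \<in> A\<close> U'(2) by blast
    qed (use U U' B B' \<open>i < k\<close> that in auto)
  qed
  then have "k \<le> k'"
    using B B' has_derivative_linear by (intro functionals_onto_count_le_if_kernel_subset) blast+
  then show ?thesis by (simp add: k_def k'_def)
qed

lemma regular_pt_dim_unique:
  fixes A :: "(complex^'N) set"
  assumes "regular_pt A z d" and "regular_pt A z d'"
  shows "d = d'"
proof -
  have "d \<le> CARD('N)" "d' \<le> CARD('N)" using assms unfolding regular_pt_def by blast+
  then show ?thesis
    using regular_pt_codim_le[OF assms] regular_pt_codim_le[OF assms(2,1)] by linarith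
qed

lemma regular_ptI:
  fixes V :: "(complex^'N) set"
  assumes "open U" "z \<in> V \<inter> U" "\<forall>i<k. holo_on U (g i)"
    "V \<inter> U = {w\<in>U. \<forall>i<k. g i w = 0}" "\<forall>w\<in>V \<inter> U. submersive_at k g w" "k \<le> CARD('N)"
  shows "regular_pt V z (CARD('N) - k)"
  unfolding regular_pt_def using assms by (intro conjI exI[of _ U] exI[of _ g]) auto

lemma regular_pt_nbhd:
  fixes A :: "(complex^'N) set"
  assumes "regular_pt A z d"
  obtains U where "open U" "z \<in> U" "\<And>w. w \<in> A \<inter> U \<Longrightarrow> regular_pt A w d"
proof -
  obtain U \<phi> where "open U" "z \<in> U" "\<forall>i<CARD('N) - d. holo_on U (\<phi> i)"
      "A \<inter> U = {w\<in>U. \<forall>i<CARD('N) - d. \<phi> i w = 0}"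
      "\<forall>w\<in>A \<inter> U. submersive_at (CARD('N) - d) \<phi> w" "d \<le> CARD('N)"
    using assms unfolding regular_pt_def by blast
  then show thesis
    using that[of U] regular_ptI[of U _ A "CARD('N) - d" \<phi>] by simp
qed

lemma germ_dim_eqI:
  assumes "\<epsilon> > 0" and "\<And>z d. z \<in> A \<inter> ball 0 \<epsilon> \<Longrightarrow> regular_pt A z d \<Longrightarrow> d \<le> m"
    and "\<And>\<delta>. \<delta> > 0 \<Longrightarrow> \<exists>z\<in>A \<inter> ball 0 \<delta>. regular_pt A z m"
  shows "germ_dim A = m"
  unfolding germ_dim_def
proof (rule Least_equality)
  show "\<exists>\<epsilon>>0. \<forall>z\<in>A \<inter> ball 0 \<epsilon>. \<forall>d. regular_pt A z d \<longrightarrow> d \<le> m" using assms(1,2) by blast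
next
  fix m' assume "\<exists>\<epsilon>>0. \<forall>z\<in>A \<inter> ball 0 \<epsilon>. \<forall>d. regular_pt A z d \<longrightarrow> d \<le> m'"
  then obtain \<delta> where "\<delta> > 0" "\<forall>z\<in>A \<inter> ball 0 \<delta>. \<forall>d. regular_pt A z d \<longrightarrow> d \<le> m'" by blast
  moreover obtain z where "z \<in> A \<inter> ball 0 \<delta>" "regular_pt A z m" using assms(3) \<open>\<delta> > 0\<close> by blast
  ultimately show "m \<le> m'" by blast
qed

section \<open>Isolated complete intersections\<close>

lemma is_ICIS_isolated_point:
  fixes V :: "(complex^'N) set"
  assumes "\<epsilon> > 0" and V: "V \<inter> ball 0 \<epsilon> = {0}"
  shows "is_ICIS V"
proof -
  obtain e :: "nat \<Rightarrow> 'N" and idx where all_iff: "\<And>P. (\<forall>i<CARD('N). P (e i)) \<longleftrightarrow> (\<forall>j. P j)"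
    and idx_e: "\<And>i. i < CARD('N) \<Longrightarrow> idx (e i) = i"
    using finite_type_enumeration[where 'a='N] by metis
  define g where "g i x = x $ e i" for i and x :: "complex^'N"
  have "(\<forall>i<CARD('N). g i x = 0) \<longleftrightarrow> x = 0" for x
    using all_iff[of "\<lambda>j. x $ j = 0"] by (simp add: g_def vec_eq_iff)
  then have zeros: "V \<inter> ball 0 \<epsilon> = {x \<in> ball 0 \<epsilon>. \<forall>i<CARD('N). g i x = 0}"
    using V \<open>\<epsilon> > 0\<close> by auto
  have holo: "\<forall>i<CARD('N). holo_on (ball 0 \<epsilon>) (g i)"
    unfolding g_def by (simp add: holo_on_vec_nth)
  have "submersive_at CARD('N) (\<lambda>i y. id y $ e i) 0"
  proof (rule submersive_at_compose_surj[OF has_derivative_id surj_id])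
    show "\<forall>w. \<exists>v::complex^'N. \<forall>i<CARD('N). v $ e i = w i"
    proof
      fix w :: "nat \<Rightarrow> complex"
      show "\<exists>v::complex^'N. \<forall>i<CARD('N). v $ e i = w i"
        using idx_e by (intro exI[of _ "\<chi> j. w (idx j)"]) simp
    qed
  qed (rule bounded_linear_vec_nth)
  then have "submersive_at CARD('N) g 0" by (simp add: g_def[abs_def])
  then have "\<forall>w\<in>V \<inter> ball 0 \<epsilon>. submersive_at CARD('N) g w" using V by simp
  moreover have "0 \<in> V \<inter> ball 0 \<epsilon>" using V by simp
  ultimately have "regular_pt V 0 (CARD('N) - CARD('N))"
    using zeros holo by (intro regular_ptI[of "ball 0 \<epsilon>"]) auto
  then have "regular_pt V 0 0" by simp
  then have "germ_dim V = 0"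
    using V \<open>\<epsilon> > 0\<close> regular_pt_dim_unique by (intro germ_dim_eqI[OF \<open>\<epsilon> > 0\<close>]) auto
  then show ?thesis
    unfolding is_ICIS_def germ_codim_def using \<open>\<epsilon> > 0\<close> zeros holo V
    by (intro exI[of _ "CARD('N)"] exI[of _ g] exI[of _ \<epsilon>]) (auto simp: g_def)
qed

lemma germ_dim_zero_set_of_submersion_off_origin:
  fixes V :: "(complex^'N) set"
  assumes "\<epsilon> > 0" and "K \<le> CARD('N)" and holo: "\<forall>i<K. holo_on (ball 0 \<epsilon>) (g i)"
    and zeros: "V \<inter> ball 0 \<epsilon> = {x \<in> ball 0 \<epsilon>. \<forall>i<K. g i x = 0}"
    and subm: "\<forall>x\<in>V \<inter> ball 0 \<epsilon> - {0}. submersive_at K g x"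
    and acc: "\<And>\<delta>. \<delta> > 0 \<Longrightarrow> \<exists>z\<in>V \<inter> ball 0 \<delta>. z \<noteq> 0"
  shows "germ_dim V = CARD('N) - K"
proof -
  have reg: "regular_pt V z (CARD('N) - K)" if "z \<in> V \<inter> ball 0 \<epsilon> - {0}" for z
  proof (rule regular_ptI[of "ball 0 \<epsilon> - {0}"])
    show "\<forall>i<K. holo_on (ball 0 \<epsilon> - {0}) (g i)" using holo holo_on_subset by blast
  qed (use that zeros subm \<open>K \<le> CARD('N)\<close> in auto)
  have near: "\<exists>z\<in>V \<inter> ball 0 \<delta> - {0}. regular_pt V z (CARD('N) - K)" if \<delta>: "\<delta> > 0" for \<delta>
  proof -
    obtain z where "z \<in> V \<inter> ball 0 (min \<delta> \<epsilon>)" "z \<noteq> 0"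
      using acc[of "min \<delta> \<epsilon>"] \<open>\<epsilon> > 0\<close> \<delta> by auto
    then show ?thesis using reg by force
  qed
  show ?thesis
  proof (rule germ_dim_eqI[OF \<open>\<epsilon> > 0\<close>])
    fix z d assume z: "z \<in> V \<inter> ball 0 \<epsilon>" and "regular_pt V z d"
    show "d \<le> CARD('N) - K"
    proof (cases "z = 0")
      case False
      then have "regular_pt V z (CARD('N) - K)" using reg z by blast
      then show ?thesis using regular_pt_dim_unique[OF \<open>regular_pt V z d\<close>] by simp
    next
      case True
      text \<open>The dimension is locally constant along regular points, and 0 is a limit of
        points where it equals CARD('N) - K.\<close>
      obtain U where "open U" "z \<in> U" and U: "\<And>w. w \<in> V \<inter> U \<Longrightarrow> regular_pt V w d"
        using regular_pt_nbhd[OF \<open>regular_pt V z d\<close>] by blast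
      moreover obtain \<delta> where "\<delta> > 0" "ball 0 \<delta> \<subseteq> U" using \<open>open U\<close> \<open>z \<in> U\<close> True openE by blast
      moreover obtain w where w: "w \<in> V \<inter> ball 0 \<delta> - {0}" "regular_pt V w (CARD('N) - K)"
        using near[OF \<open>\<delta> > 0\<close>] by blast
      ultimately have "regular_pt V w d" by blast
      then show ?thesis using regular_pt_dim_unique[OF _ w(2)] by simp
    qed
  qed (use near in blast)
qed

lemma is_ICIS_of_submersive_off_origin:
  fixes V :: "(complex^'N) set"
  assumes "\<epsilon> > 0" and holo: "\<forall>i<K. holo_on (ball 0 \<epsilon>) (g i)" and "\<forall>i<K. g i 0 = 0"
    and zeros: "V \<inter> ball 0 \<epsilon> = {x \<in> ball 0 \<epsilon>. \<forall>i<K. g i x = 0}"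
    and subm: "\<forall>x\<in>V \<inter> ball 0 \<epsilon> - {0}. submersive_at K g x"
  shows "is_ICIS V"
proof (cases "\<exists>\<delta>>0. V \<inter> ball 0 \<delta> \<subseteq> {0}")
  case True
  then obtain \<delta> where "\<delta> > 0" "V \<inter> ball 0 \<delta> \<subseteq> {0}" by blast
  moreover have "0 \<in> V" using zeros \<open>\<epsilon> > 0\<close> \<open>\<forall>i<K. g i 0 = 0\<close> by auto
  ultimately have "V \<inter> ball 0 \<delta> = {0}" by auto
  then show ?thesis by (rule is_ICIS_isolated_point[OF \<open>\<delta> > 0\<close>])
next
  case False
  then have acc: "\<And>\<delta>. \<delta> > 0 \<Longrightarrow> \<exists>z\<in>V \<inter> ball 0 \<delta>. z \<noteq> 0" by blast
  then obtain z where "z \<in> V \<inter> ball 0 \<epsilon> - {0}" using \<open>\<epsilon> > 0\<close> by blast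
  then have "K \<le> CARD('N)" using subm submersive_at_le_card by blast
  then have "germ_dim V = CARD('N) - K"
    using germ_dim_zero_set_of_submersion_off_origin[OF \<open>\<epsilon> > 0\<close> _ holo zeros subm acc] by blast
  then show ?thesis
    unfolding is_ICIS_def germ_codim_def using assms \<open>K \<le> CARD('N)\<close>
    by (intro exI[of _ K] exI[of _ g] exI[of _ \<epsilon>]) auto
qed

section \<open>Essentially isolated determinantal singularities\<close>

lemma rank_eq_0_iff: "rank A = 0 \<longleftrightarrow> A = 0" for A :: "'a::field^'n^'m"
proof -
  have "rank A = 0 \<longleftrightarrow> rows A \<subseteq> {0}" by (simp add: row_rank_def_gen vec.dim_eq_0)
  also have "\<dots> \<longleftrightarrow> A = 0"
  proof
    assume "rows A \<subseteq> {0}"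
    then have "row i A = 0" for i unfolding rows_def by blast
    then show "A = 0" by (simp add: row_def vec_eq_iff)
  qed (auto simp: rows_def row_def vec_eq_iff)
  finally show ?thesis .
qed

lemma tangent_vecs_singleton: "tangent_vecs {a} a = {0}"
proof -
  have "(\<gamma> has_vector_derivative v) (at 0) \<longleftrightarrow> v = 0" if "\<forall>t. \<gamma> t \<in> {a}" for \<gamma> and v :: 'a
  proof -
    have "\<gamma> = (\<lambda>_. a)" using that by auto
    then show ?thesis using vector_derivative_unique_at has_vector_derivative_const by metis
  qed
  then show ?thesis unfolding tangent_vecs_def by (auto intro!: exI[of _ "\<lambda>_. a"])
qed

lemma is_EIDS_imp_surj_derivative_on_zero_set:
  fixes F :: "complex^'N \<Rightarrow> complex^'n^'m"
  assumes "is_EIDS U F t" and "t \<ge> 1"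
  obtains \<epsilon> where "\<epsilon> > 0"
    and "\<And>x. x \<in> {x\<in>U. F x = 0} \<inter> ball 0 \<epsilon> - {0} \<Longrightarrow> \<exists>L. (F has_derivative L) (at x) \<and> surj L"
proof -
  obtain \<epsilon> where "\<epsilon> > 0" and ess: "\<forall>x\<in>{x\<in>U. F x \<in> det_var t} \<inter> ball 0 \<epsilon> - {0}. ess_nonsingular F x"
    using assms(1) unfolding is_EIDS_def Let_def by blast
  text \<open>At a zero of F the stratum through F x is the point 0, whose tangent space is 0.\<close>
  have "\<exists>L. (F has_derivative L) (at x) \<and> surj L"
    if x: "x \<in> {x\<in>U. F x = 0} \<inter> ball 0 \<epsilon> - {0}" for x
  proof -
    have "rank (F x) = 0" using x by (simp add: rank_eq_0_iff)
    then have "ess_nonsingular F x" using ess x \<open>t \<ge> 1\<close> by (auto simp: det_var_def)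
    moreover have "det_var 1 - det_var 0 = {0::complex^'n^'m}" by (auto simp: det_var_def rank_eq_0_iff)
    ultimately have "transversal_at F x {0}"
      using \<open>rank (F x) = 0\<close> by (simp add: ess_nonsingular_def)
    then obtain L where "(F has_derivative L) (at x)" "{L u + v |u v. v \<in> tangent_vecs {0} (F x)} = UNIV"
      unfolding transversal_at_def by blast
    moreover have "tangent_vecs {0} (F x) = {0}" using x by (simp add: tangent_vecs_singleton)
    ultimately have "range L = UNIV" by (simp add: full_SetCompr_eq)
    with \<open>(F has_derivative L) (at x)\<close> show ?thesis by blast
  qed
  with \<open>\<epsilon> > 0\<close> show thesis using that by blast
qed

lemma submersive_at_matrix_entries:
  fixes F :: "complex^'N \<Rightarrow> complex^'n^'m" and e :: "nat \<Rightarrow> 'm \<times> 'n"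
  assumes "(F has_derivative L) (at x)" "surj L" "\<And>i. i < CARD('m \<times> 'n) \<Longrightarrow> idx (e i) = i"
  shows "submersive_at CARD('m \<times> 'n) (\<lambda>i y. F y $ fst (e i) $ snd (e i)) x"
proof (rule submersive_at_compose_surj[OF assms(1,2)])
  show "bounded_linear (\<lambda>M. M $ fst (e i) $ snd (e i))" for i
    using bounded_linear_compose[OF bounded_linear_vec_nth[of "snd (e i)"] bounded_linear_vec_nth[of "fst (e i)"]]
    by (simp add: o_def)
  show "\<forall>w. \<exists>M::complex^'n^'m. \<forall>i<CARD('m \<times> 'n). M $ fst (e i) $ snd (e i) = w i"
  proof
    fix w :: "nat \<Rightarrow> complex"
    show "\<exists>M::complex^'n^'m. \<forall>i<CARD('m \<times> 'n). M $ fst (e i) $ snd (e i) = w i"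
      using assms(3) by (intro exI[of _ "\<chi> a b. w (idx (a, b))"]) simp
  qed
qed

lemma is_ICIS_zero_set_if_surj_derivative:
  fixes F :: "complex^'N \<Rightarrow> complex^'n^'m"
  assumes "open U" "0 \<in> U" "holo_mat_on U F" "F 0 = 0" "\<epsilon> > 0"
    and surj: "\<And>x. x \<in> {x\<in>U. F x = 0} \<inter> ball 0 \<epsilon> - {0} \<Longrightarrow> \<exists>L. (F has_derivative L) (at x) \<and> surj L"
  shows "is_ICIS {x\<in>U. F x = 0}"
proof -
  obtain r where "r > 0" "ball 0 r \<subseteq> U" using assms(1,2) openE by blast
  define \<delta> where "\<delta> = min \<epsilon> r"
  have "\<delta> > 0" "ball 0 \<delta> \<subseteq> U" using \<open>\<epsilon> > 0\<close> \<open>r > 0\<close> \<open>ball 0 r \<subseteq> U\<close> by (auto simp: \<delta>_def)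
  obtain e :: "nat \<Rightarrow> 'm \<times> 'n" and idx
    where all_iff: "\<And>P. (\<forall>i<CARD('m \<times> 'n). P (e i)) \<longleftrightarrow> (\<forall>j. P j)"
      and idx_e: "\<And>i. i < CARD('m \<times> 'n) \<Longrightarrow> idx (e i) = i"
    using finite_type_enumeration[where 'a="'m \<times> 'n"] by metis
  define g where "g i x = F x $ fst (e i) $ snd (e i)" for i x
  have "F x = 0 \<longleftrightarrow> (\<forall>i<CARD('m \<times> 'n). g i x = 0)" for x
    using all_iff[of "\<lambda>p. F x $ fst p $ snd p = 0"] by (simp add: g_def vec_eq_iff)
  then show ?thesis
  proof (intro is_ICIS_of_submersive_off_origin[OF \<open>\<delta> > 0\<close>])
    show "\<forall>i<CARD('m \<times> 'n). holo_on (ball 0 \<delta>) (g i)"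
      using assms(3) \<open>ball 0 \<delta> \<subseteq> U\<close> holo_on_subset unfolding holo_mat_on_def g_def by blast
    show "\<forall>x\<in>{x\<in>U. F x = 0} \<inter> ball 0 \<delta> - {0}. submersive_at CARD('m \<times> 'n) g x"
    proof
      fix x assume "x \<in> {x\<in>U. F x = 0} \<inter> ball 0 \<delta> - {0}"
      then obtain L where "(F has_derivative L) (at x)" "surj L" using surj by (force simp: \<delta>_def)
      from submersive_at_matrix_entries[OF this idx_e]
      show "submersive_at CARD('m \<times> 'n) g x" by (simp add: g_def[abs_def])
    qed
  qed (use \<open>ball 0 \<delta> \<subseteq> U\<close> assms(4) in \<open>auto simp: g_def\<close>)
qed

theorem mainTheorem2:
  fixes F :: "complex^'N \<Rightarrow> complex^'n^2" and U :: "(complex^'N) set"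
  assumes "CARD('n) \<ge> 2"
    and "open U" and "0 \<in> U" and "holo_mat_on U F" and "F 0 = 0"
    and "is_EIDS U F 2"
  shows "{x\<in>U. F x \<in> det_var 1} = {x\<in>U. F x = 0} \<and> is_ICIS {x\<in>U. F x = 0}"
proof
  show "{x\<in>U. F x \<in> det_var 1} = {x\<in>U. F x = 0}" by (auto simp: det_var_def rank_eq_0_iff)
  obtain \<epsilon> where "\<epsilon> > 0"
    and "\<And>x. x \<in> {x\<in>U. F x = 0} \<inter> ball 0 \<epsilon> - {0} \<Longrightarrow> \<exists>L. (F has_derivative L) (at x) \<and> surj L"
    using is_EIDS_imp_surj_derivative_on_zero_set[OF assms(6)] by auto
  with assms(2-5) show "is_ICIS {x\<in>U. F x = 0}" by (rule is_ICIS_zero_set_if_surj_derivative)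
qed

end
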